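(* Let $0<R\le\infty$ and let $\varphi$ be a quasiconcave function on $[0,R)$. Then: (i) there is $C>0$ such that $(S_\varphi f)^{**}(t)\le C\,S_\varphi(f^{**})(t)$ for all measurable $f$ on $(0,R)$ and all $t\in(0,R)$ if and only if $\varphi$ satisfies the $B$-condition; (ii) there is $C>0$ such that $S_\varphi(f^{**})(t)\le C\,S_\varphi f(t)$ for all measurable $f$ on $(0,R)$ and all $t\in(0,R)$ if and only if $\varphi$ satisfies the $B$-condition.
   Context: For a measurable a.e. finite function $f$ on $(0,R)$, $f^*$ is its non-increasing rearrangement, $f^*(t)=\inf\{\lambda>0: |\{x:|f(x)|>\lambda\}|\le t\}$, and $f^{**}(t)=\frac1t\int_0^t f^*(s)\,ds$. A function $\varphi\colon[0,R)\to[0,\infty)$ is quasiconcave if $\varphi(t)=0$ iff $t=0$, $\varphi$ is non-decreasing, and $\varphi(t)/t$ is non-increasing on $(0,R)$. It satisfies the $B$-condition if there is $C>0$ with $\frac1t\int_0^t \frac{ds}{\varphi(s)}\le \frac{C}{\varphi(t)}$ for all $t\in(0,R)$. $S_\varphi f(t)=\frac{1}{\varphi(t)}\sup_{0<s<t}\varphi(s)f^*(s)$, $t\in(0,R)$; $S_\varphi(f^{**})$ is $S_\varphi$ applied to the function $f^{**}$. *)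

theory Defs
  imports "HOL-Analysis.Analysis"
begin

definition openI :: "ereal \<Rightarrow> real set" where
  "openI R = {x. 0 < x \<and> ereal x < R}"

definition distfun :: "ereal \<Rightarrow> (real \<Rightarrow> ennreal) \<Rightarrow> ennreal \<Rightarrow> ennreal" where
  "distfun R g lam = emeasure lebesgue {x \<in> openI R. g x > lam}"

definition rearr :: "ereal \<Rightarrow> (real \<Rightarrow> ennreal) \<Rightarrow> real \<Rightarrow> ennreal" where
  "rearr R g t = Inf {lam. 0 < lam \<and> distfun R g lam \<le> ennreal t}"

definition dstar :: "ereal \<Rightarrow> (real \<Rightarrow> ennreal) \<Rightarrow> real \<Rightarrow> ennreal" where
  "dstar R g t = ennreal (1 / t) * (\<integral>\<^sup>+ s \<in> {0<..<t}. rearr R g s \<partial>lborel)"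

definition Sphi :: "(real \<Rightarrow> real) \<Rightarrow> ereal \<Rightarrow> (real \<Rightarrow> ennreal) \<Rightarrow> real \<Rightarrow> ennreal" where
  "Sphi \<phi> R g t = ennreal (1 / \<phi> t) * (SUP s \<in> {0<..<t}. ennreal (\<phi> s) * rearr R g s)"

definition quasiconcave :: "ereal \<Rightarrow> (real \<Rightarrow> real) \<Rightarrow> bool" where
  "quasiconcave R \<phi> \<longleftrightarrow>
     (\<forall>t. 0 \<le> t \<and> ereal t < R \<longrightarrow> 0 \<le> \<phi> t \<and> (\<phi> t = 0 \<longleftrightarrow> t = 0)) \<and>
     mono_on {t. 0 \<le> t \<and> ereal t < R} \<phi> \<and>
     antimono_on (openI R) (\<lambda>t. \<phi> t / t)"

definition B_condition :: "ereal \<Rightarrow> (real \<Rightarrow> real) \<Rightarrow> bool" where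
  "B_condition R \<phi> \<longleftrightarrow> (\<exists>C>0. \<forall>t \<in> openI R.
      ennreal (1 / t) * (\<integral>\<^sup>+ s \<in> {0<..<t}. ennreal (1 / \<phi> s) \<partial>lborel) \<le> ennreal (C / \<phi> t))"

end

theory Submission
  imports Defs
begin

text \<open>
Quasiconcavity gives \<phi>(t) \<le> 2\<phi>(t/2) and makes 1/\<phi> non-increasing. The B-condition with
constant C says: if g*(u) \<le> M/\<phi>(u) on (0,s), then g**(s) \<le> C M/\<phi>(s). Applied to g = f and
M = \<phi>(t) S f(t) this gives (ii). For (i) apply it to g = S f: splitting the supremum at u gives
(S f)*(u) \<le> S f(u) + f*(u) \<le> 2P/\<phi>(u) with P = sup{\<phi>(u) f**(u) : u < t}, and P \<le> 2\<phi>(t) S(f**)(t)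
because f**(u) \<le> (f**)*(u/2).

Conversely, the rearrangement of f(x) = 1/\<phi>(x/2) lies between 1/\<phi> and 2/\<phi>, so (ii) for this f
is the B-condition up to a constant. For the indicator f of (0,a) one has (S f)*(u) \<ge> \<phi>(a)/(4\<phi>(u))
for u \<ge> a, while S(f**)(t) \<le> \<phi>(a)/\<phi>(t); so (i) bounds the integral of 1/\<phi> over (a,t) by 4Ct/\<phi>(t),
and monotone convergence lets a tend to 0.
\<close>

lemma ennreal_mult_inverse_cancel: "0 < a \<Longrightarrow> ennreal a * (ennreal (1 / a) * x) = x"
  by (simp add: mult.assoc[symmetric] ennreal_mult[symmetric])

lemma ennreal_inverse_mult_le_cancel:
  assumes "0 < a" "ennreal (1 / a) * x \<le> ennreal (1 / a) * y" shows "x \<le> y"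
proof -
  have "ennreal a * (ennreal (1 / a) * x) \<le> ennreal a * (ennreal (1 / a) * y)"
    using assms(2) by (rule mult_left_mono) simp
  then show ?thesis using assms(1) by (simp only: ennreal_mult_inverse_cancel)
qed

lemma ennreal_le_inverse_mult:
  assumes "0 < a" "ennreal a * x \<le> y" shows "x \<le> ennreal (1 / a) * y"
proof -
  have "ennreal (1 / a) * (ennreal a * x) \<le> ennreal (1 / a) * y" using assms(2) by (rule mult_left_mono) simp
  then show ?thesis using assms(1) by (simp add: mult.assoc[symmetric] ennreal_mult[symmetric])
qed

lemma borel_measurable_interval_superlevels:
  fixes h :: "real \<Rightarrow> 'b::{linorder_topology, second_countable_topology}"
  assumes J: "is_interval J" and lv: "\<And>c. is_interval {x\<in>J. c < h x}"
  shows "h \<in> borel_measurable (restrict_space borel J)"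
proof (rule borel_measurableI_greater)
  fix c
  have "J \<in> sets borel" "{x\<in>J. c < h x} \<in> sets borel"
    using J lv real_interval_borel_measurable by blast+
  then show "{x \<in> space (restrict_space borel J). c < h x} \<in> sets (restrict_space borel J)"
    by (auto simp: space_restrict_space sets_restrict_space_iff)
qed

lemma borel_measurable_mono_on_interval:
  fixes h :: "real \<Rightarrow> 'b::{linorder_topology, second_countable_topology}"
  assumes "is_interval J" "mono_on J h"
  shows "h \<in> borel_measurable (restrict_space borel J)"
proof (rule borel_measurable_interval_superlevels[OF assms(1)])
  fix c
  show "is_interval {x\<in>J. c < h x}"
  proof (unfold is_interval_1, intro ballI allI impI, elim conjE)
    fix a b x assume a: "a \<in> {x\<in>J. c < h x}" and b: "b \<in> {x\<in>J. c < h x}" "a \<le> x" "x \<le> b"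
    then have "x \<in> J" using assms(1) unfolding is_interval_1 by blast
    with a b have "h a \<le> h x" using assms(2) by (auto intro: mono_onD)
    with a \<open>x \<in> J\<close> show "x \<in> {x\<in>J. c < h x}" by auto
  qed
qed

lemma borel_measurable_antimono_on_interval:
  fixes h :: "real \<Rightarrow> 'b::{linorder_topology, second_countable_topology}"
  assumes "is_interval J" "antimono_on J h"
  shows "h \<in> borel_measurable (restrict_space borel J)"
proof (rule borel_measurable_interval_superlevels[OF assms(1)])
  fix c
  show "is_interval {x\<in>J. c < h x}"
  proof (unfold is_interval_1, intro ballI allI impI, elim conjE)
    fix a b x assume a: "a \<in> {x\<in>J. c < h x}" and b: "b \<in> {x\<in>J. c < h x}" "a \<le> x" "x \<le> b"
    then have "x \<in> J" using assms(1) unfolding is_interval_1 by blast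
    with a b have "h b \<le> h x" using assms(2) by (auto intro: monotone_onD)
    with b \<open>x \<in> J\<close> show "x \<in> {x\<in>J. c < h x}" by auto
  qed
qed

lemma borel_measurable_restrict_lebesgue:
  fixes h :: "real \<Rightarrow> real"
  assumes J: "J \<in> sets borel" and h: "h \<in> borel_measurable (restrict_space borel J)"
  shows "h \<in> borel_measurable (restrict_space lebesgue J)"
proof -
  have "(\<lambda>x. if x \<in> J then h x else 0) \<in> borel_measurable borel"
    using h J by (subst measurable_restrict_space_iff[symmetric]) simp_all
  then have "(\<lambda>x. if x \<in> J then h x else 0) \<in> borel_measurable lebesgue"
    by (intro measurable_completion) (simp add: measurable_lborel1)
  then show ?thesis
    using J by (subst measurable_restrict_space_iff) (simp_all add: sets_completionI_sets)
qed

lemma nn_integral_Ioo_le_of_truncations: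
  fixes h :: "real \<Rightarrow> ennreal"
  assumes h: "(\<lambda>x. h x * indicator {0<..<t} x) \<in> borel_measurable borel"
    and le: "\<And>a. 0 < a \<Longrightarrow> a < t \<Longrightarrow> (\<integral>\<^sup>+ x \<in> {a<..<t}. h x \<partial>lborel) \<le> B"
  shows "(\<integral>\<^sup>+ x \<in> {0<..<t}. h x \<partial>lborel) \<le> B"
proof (cases "0 < t")
  case True
  define A where "A n = {t / (real n + 2)<..<t}" for n :: nat
  let ?\<mu> = "density lborel (\<lambda>x. h x * indicator {0<..<t} x)"
  have A_sub: "A n \<subseteq> {0<..<t}" for n
  proof -
    have "0 < t / (real n + 2)" using True by simp
    then show ?thesis by (auto simp: A_def)
  qed
  have "t / (real n + 2) \<le> t / (real m + 2)" if "m \<le> n" for m n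
    using True that by (intro divide_left_mono) auto
  then have "incseq A" by (force simp: A_def mono_def)
  have "(\<Union>n. A n) = {0<..<t}"
  proof (intro equalityI subsetI)
    fix x assume x: "x \<in> {0<..<t}"
    obtain n :: nat where "t / x < real n" using reals_Archimedean2 by blast
    then have "t / (real n + 2) < x" using x by (simp add: field_simps)
    with x show "x \<in> (\<Union>n. A n)" by (auto simp: A_def)
  qed (use A_sub in blast)
  have emeasure_\<mu>: "emeasure ?\<mu> S = (\<integral>\<^sup>+ x \<in> S. h x \<partial>lborel)" if "S \<in> sets borel" "S \<subseteq> {0<..<t}" for S
    using h that by (subst emeasure_density) (auto simp: indicator_def intro!: nn_integral_cong)
  have "(\<integral>\<^sup>+ x \<in> {0<..<t}. h x \<partial>lborel) = emeasure ?\<mu> (\<Union>n. A n)"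
    using \<open>(\<Union>n. A n) = {0<..<t}\<close> by (simp add: emeasure_\<mu>)
  also have "\<dots> = (SUP n. emeasure ?\<mu> (A n))"
    using \<open>incseq A\<close> by (subst SUP_emeasure_incseq) (auto simp: A_def)
  also have "\<dots> \<le> B"
  proof (rule SUP_least)
    fix n
    have "emeasure ?\<mu> (A n) = (\<integral>\<^sup>+ x \<in> A n. h x \<partial>lborel)"
      using A_sub by (intro emeasure_\<mu>) (simp_all add: A_def)
    also have "\<dots> \<le> B" unfolding A_def using True by (intro le) (simp_all add: field_simps add_pos_nonneg)
    finally show "emeasure ?\<mu> (A n) \<le> B" .
  qed
  finally show ?thesis .
qed simp

section \<open>The interval (0,R) and quasiconcave functions\<close>

lemma openI_downward: "t \<in> openI R \<Longrightarrow> 0 < s \<Longrightarrow> s \<le> t \<Longrightarrow> s \<in> openI R"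
  unfolding openI_def by (metis (mono_tags) ereal_less_eq(3) mem_Collect_eq order.strict_trans1)

lemma Ioc_subset_openI: "t \<in> openI R \<Longrightarrow> {0<..t} \<subseteq> openI R"
  using openI_downward by auto

lemma openI_half: "t \<in> openI R \<Longrightarrow> t/2 \<in> openI R"
  by (rule openI_downward) (auto simp: openI_def)

lemma is_interval_openI: "is_interval (openI R)"
proof (unfold is_interval_1, intro ballI allI impI, elim conjE)
  fix a b x assume "a \<in> openI R" "b \<in> openI R" "a \<le> x" "x \<le> b"
  then show "x \<in> openI R" using openI_downward[of b R x] by (simp add: openI_def)
qed

lemma openI_sets_borel: "openI R \<in> sets borel"
  using is_interval_openI real_interval_borel_measurable by blast

lemma openI_exists_larger:
  assumes "t \<in> openI R" shows "\<exists>t'. t < t' \<and> t' \<le> 2*t \<and> t' \<in> openI R"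
proof (cases R)
  case (real r)
  with assms have "0 < t" "t < r" by (auto simp: openI_def)
  with real show ?thesis by (intro exI[of _ "min (2*t) ((t+r)/2)"]) (auto simp: openI_def min_less_iff_disj)
next
  case PInf
  with assms show ?thesis by (intro exI[of _ "2*t"]) (auto simp: openI_def)
qed (use assms in \<open>simp add: openI_def\<close>)

lemma quasiconcave_pos: "quasiconcave R \<phi> \<Longrightarrow> t \<in> openI R \<Longrightarrow> 0 < \<phi> t"
  unfolding quasiconcave_def openI_def by (metis less_eq_real_def mem_Collect_eq)

lemma quasiconcave_mono:
  "quasiconcave R \<phi> \<Longrightarrow> s \<in> openI R \<Longrightarrow> t \<in> openI R \<Longrightarrow> s \<le> t \<Longrightarrow> \<phi> s \<le> \<phi> t"
  unfolding quasiconcave_def openI_def mono_on_def by auto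

lemma quasiconcave_ratio:
  assumes "quasiconcave R \<phi>" "s \<in> openI R" "t \<in> openI R" "s \<le> t"
  shows "\<phi> t * s \<le> \<phi> s * t"
proof -
  have "\<phi> t / t \<le> \<phi> s / s"
    using assms by (auto simp: quasiconcave_def intro: monotone_onD)
  moreover have "0 < s" "0 < t" using assms by (auto simp: openI_def)
  ultimately show ?thesis by (simp add: field_simps)
qed

lemma quasiconcave_le_double_half:
  assumes "quasiconcave R \<phi>" "t \<in> openI R" shows "\<phi> t \<le> 2 * \<phi> (t/2)"
  using quasiconcave_ratio[OF assms(1) openI_half[OF assms(2)] assms(2)] assms(2) by (simp add: openI_def)

lemma quasiconcave_inverse_antimono:
  "quasiconcave R \<phi> \<Longrightarrow> s \<in> openI R \<Longrightarrow> t \<in> openI R \<Longrightarrow> s \<le> t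
    \<Longrightarrow> ennreal (1 / \<phi> t) \<le> ennreal (1 / \<phi> s)"
  by (intro ennreal_leI divide_left_mono) (auto intro: quasiconcave_pos quasiconcave_mono mult_pos_pos)

lemma borel_measurable_inverse_phi_indicator:
  assumes q: "quasiconcave R \<phi>" and J: "is_interval J" "J \<subseteq> openI R"
  shows "(\<lambda>u. ennreal (1 / \<phi> u) * indicator J u) \<in> borel_measurable borel"
proof -
  have "antimono_on J (\<lambda>u. ennreal (1 / \<phi> u))"
    using J(2) by (intro monotone_onI quasiconcave_inverse_antimono[OF q]) auto
  then have "(\<lambda>u. ennreal (1 / \<phi> u)) \<in> borel_measurable (restrict_space borel J)"
    using J(1) by (rule borel_measurable_antimono_on_interval[rotated])
  then have "(\<lambda>u. if u \<in> J then ennreal (1 / \<phi> u) else 0) \<in> borel_measurable borel"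
    using J(1) real_interval_borel_measurable by (subst measurable_restrict_space_iff[symmetric]) simp_all
  also have "(\<lambda>u. if u \<in> J then ennreal (1 / \<phi> u) else 0) = (\<lambda>u. ennreal (1 / \<phi> u) * indicator J u)"
    by (auto simp: indicator_def)
  finally show ?thesis .
qed

section \<open>Rearrangements and the operators\<close>

lemma rearr_le_of_bound:
  assumes "0 < s" and L: "\<And>x. x \<in> openI R \<Longrightarrow> s \<le> x \<Longrightarrow> g x \<le> L"
  shows "rearr R g s \<le> L"
proof (rule dense_ge)
  fix lam assume "L < lam"
  then have "{x \<in> openI R. lam < g x} \<subseteq> {0<..<s}"
    using L by (force simp: openI_def)
  then have "distfun R g lam \<le> emeasure lebesgue {0<..<s}"
    unfolding distfun_def by (intro emeasure_mono) simp_all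
  also have "\<dots> = ennreal s" using \<open>0 < s\<close> by (simp add: emeasure_completion)
  finally have "distfun R g lam \<le> ennreal s" .
  moreover have "0 < lam" using \<open>L < lam\<close> by (metis le_less_trans zero_le)
  ultimately show "rearr R g s \<le> lam" unfolding rearr_def by (intro Inf_lower) simp
qed

lemma rearr_ge_of_bound:
  assumes meas: "g \<in> borel_measurable (restrict_space borel (openI R))"
    and "0 \<le> s" "s < s'" "s' \<in> openI R"
    and L: "\<And>x. x \<in> openI R \<Longrightarrow> x \<le> s' \<Longrightarrow> L \<le> g x"
  shows "L \<le> rearr R g s"
  unfolding rearr_def
proof (rule Inf_greatest, rule ccontr)
  fix lam assume lam: "lam \<in> {lam. 0 < lam \<and> distfun R g lam \<le> ennreal s}" "\<not> L \<le> lam"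
  have "g -` {lam<..} \<inter> space (restrict_space borel (openI R)) \<in> sets (restrict_space borel (openI R))"
    using meas by (rule measurable_sets) simp
  then have "{x \<in> openI R. lam < g x} \<in> sets borel"
    using openI_sets_borel by (simp add: sets_restrict_space_iff space_restrict_space Int_def conj_commute)
  moreover have "{0<..s'} \<subseteq> {x \<in> openI R. lam < g x}"
    using L lam(2) Ioc_subset_openI[OF \<open>s' \<in> openI R\<close>] by (force simp: not_le intro: less_le_trans)
  ultimately have "emeasure lebesgue {0<..s'} \<le> distfun R g lam"
    unfolding distfun_def by (intro emeasure_mono sets_completionI_sets) simp_all
  also have "\<dots> \<le> ennreal s" using lam(1) by simp
  finally have "s' \<le> s"
    using \<open>s' \<in> openI R\<close> \<open>0 \<le> s\<close> by (simp add: emeasure_completion openI_def ennreal_le_iff)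
  then show False using \<open>s < s'\<close> by simp
qed

lemma rearr_antimono: "s \<le> s' \<Longrightarrow> rearr R g s' \<le> rearr R g s"
  unfolding rearr_def by (intro Inf_superset_mono) (auto intro: order_trans ennreal_leI)

lemma borel_measurable_rearr: "rearr R g \<in> borel_measurable borel"
  using borel_measurable_antimono_on_interval[of UNIV "rearr R g"]
  by (simp add: monotone_on_def rearr_antimono)

lemma rearr_le_antimono_on:
  assumes "antimono_on (openI R) g" "t \<in> openI R"
  shows "rearr R g t \<le> g t"
  using assms by (intro rearr_le_of_bound) (auto simp: openI_def intro: monotone_onD)

lemma antimono_on_le_rearr:
  assumes "antimono_on (openI R) g" "t \<in> openI R" "0 \<le> s" "s < t"
  shows "g t \<le> rearr R g s"
  using assms
  by (intro rearr_ge_of_bound borel_measurable_antimono_on_interval is_interval_openI)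
     (auto intro: monotone_onD)

lemma dstar_eq_scaled_integral:
  assumes "0 < t"
  shows "dstar R g t = (\<integral>\<^sup>+ x. rearr R g (t * x) * indicator {0<..<1} x \<partial>lborel)"
proof -
  let ?F = "\<lambda>s. rearr R g s * indicator {0<..<t} s"
  have "?F \<in> borel_measurable borel"
    by (intro borel_measurable_times_ennreal borel_measurable_rearr borel_measurable_indicator) simp
  then have "(\<integral>\<^sup>+ s. ?F s \<partial>lborel) = ennreal t * (\<integral>\<^sup>+ x. ?F (t * x) \<partial>lborel)"
    using nn_integral_real_affine[of ?F t 0] assms by simp
  also have "(\<lambda>x. ?F (t * x)) = (\<lambda>x. rearr R g (t * x) * indicator {0<..<1} x)"
    using assms by (auto simp: indicator_def zero_less_mult_iff)
  finally show ?thesis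
    using assms by (simp add: dstar_def mult.assoc[symmetric] ennreal_mult[symmetric])
qed

lemma dstar_antimono: "0 < u \<Longrightarrow> u \<le> t \<Longrightarrow> dstar R g t \<le> dstar R g u"
  by (simp add: dstar_eq_scaled_integral)
     (intro nn_integral_mono, auto simp: indicator_def intro: rearr_antimono)

lemma antimono_on_dstar: "antimono_on (openI R) (dstar R g)"
  by (intro monotone_onI dstar_antimono) (simp_all add: openI_def)

lemma rearr_le_dstar:
  assumes "0 < t" shows "rearr R g t \<le> dstar R g t"
proof -
  have "rearr R g t = (\<integral>\<^sup>+ x. rearr R g t * indicator {0<..<1::real} x \<partial>lborel)"
    by (simp add: nn_integral_cmult_indicator)
  also have "\<dots> \<le> (\<integral>\<^sup>+ x. rearr R g (t * x) * indicator {0<..<1} x \<partial>lborel)"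
    using assms by (intro nn_integral_mono) (auto simp: indicator_def intro: rearr_antimono)
  finally show ?thesis using assms by (simp add: dstar_eq_scaled_integral)
qed

lemma Sphi_le_of_bound:
  "(\<And>s. s \<in> {0<..<t} \<Longrightarrow> ennreal (\<phi> s) * rearr R g s \<le> M) \<Longrightarrow> Sphi \<phi> R g t \<le> ennreal (1 / \<phi> t) * M"
  unfolding Sphi_def by (intro mult_left_mono SUP_least) auto

lemma le_Sphi:
  "s \<in> {0<..<t} \<Longrightarrow> ennreal (1 / \<phi> t) * (ennreal (\<phi> s) * rearr R g s) \<le> Sphi \<phi> R g t"
  unfolding Sphi_def by (intro mult_left_mono SUP_upper) auto

lemma borel_measurable_Sphi:
  assumes q: "quasiconcave R \<phi>"
  shows "Sphi \<phi> R g \<in> borel_measurable (restrict_space borel (openI R))"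
proof -
  have "(\<lambda>t. SUP s\<in>{0<..<t}. ennreal (\<phi> s) * rearr R g s) \<in> borel_measurable (restrict_space borel (openI R))"
    by (intro borel_measurable_mono_on_interval is_interval_openI mono_onI SUP_subset_mono) auto
  moreover have "(\<lambda>t. ennreal (1 / \<phi> t)) \<in> borel_measurable (restrict_space borel (openI R))"
    by (intro borel_measurable_antimono_on_interval is_interval_openI monotone_onI
        quasiconcave_inverse_antimono[OF q])
  ultimately show ?thesis
    unfolding Sphi_def[abs_def] by (rule borel_measurable_times_ennreal[rotated])
qed

lemma Sphi_le_Sphi_add_rearr:
  assumes q: "quasiconcave R \<phi>" and u: "u \<in> openI R" and x: "x \<in> openI R" "u \<le> x"
  shows "Sphi \<phi> R g x \<le> Sphi \<phi> R g u + rearr R g u"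
proof -
  have "ennreal (1 / \<phi> x) * (ennreal (\<phi> s) * rearr R g s) \<le> Sphi \<phi> R g u + rearr R g u"
    if s: "s \<in> {0<..<x}" for s
  proof (cases "s < u")
    case True
    have "ennreal (1 / \<phi> x) * (ennreal (\<phi> s) * rearr R g s) \<le> ennreal (1 / \<phi> u) * (ennreal (\<phi> s) * rearr R g s)"
      using quasiconcave_inverse_antimono[OF q u x] by (rule mult_right_mono) simp
    also have "\<dots> \<le> Sphi \<phi> R g u" using True s by (intro le_Sphi) auto
    finally show ?thesis by (rule add_increasing2[rotated]) simp
  next
    case False
    have sI: "s \<in> openI R" using s Ioc_subset_openI[OF x(1)] by auto
    have "\<phi> s \<le> \<phi> x" using quasiconcave_mono[OF q sI x(1)] s by simp
    then have "ennreal (1 / \<phi> x) * ennreal (\<phi> s) \<le> 1"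
      using quasiconcave_pos[OF q sI] quasiconcave_pos[OF q x(1)]
      by (simp add: ennreal_mult[symmetric] ennreal_le_1)
    moreover have "rearr R g s \<le> rearr R g u" using False by (intro rearr_antimono) simp
    ultimately have "(ennreal (1 / \<phi> x) * ennreal (\<phi> s)) * rearr R g s \<le> 1 * rearr R g u"
      by (rule mult_mono) simp_all
    then show ?thesis by (simp add: mult.assoc add_increasing)
  qed
  then show ?thesis unfolding Sphi_def SUP_mult_left_ennreal by (rule SUP_least)
qed

lemma rearr_Sphi_le:
  "quasiconcave R \<phi> \<Longrightarrow> u \<in> openI R \<Longrightarrow> rearr R (Sphi \<phi> R g) u \<le> Sphi \<phi> R g u + rearr R g u"
  by (rule rearr_le_of_bound) (auto simp: openI_def intro: Sphi_le_Sphi_add_rearr)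

lemma SUP_phi_dstar_le:
  assumes q: "quasiconcave R \<phi>" and t: "t \<in> openI R"
  shows "(SUP u\<in>{0<..<t}. ennreal (\<phi> u) * dstar R g u) \<le> 2 * ennreal (\<phi> t) * Sphi \<phi> R (dstar R g) t"
proof -
  define Q where "Q = (SUP s\<in>{0<..<t}. ennreal (\<phi> s) * rearr R (dstar R g) s)"
  have bound: "ennreal (\<phi> u) * dstar R g u \<le> 2 * Q" if u: "u \<in> {0<..<t}" for u
  proof -
    have uI: "u \<in> openI R" using u Ioc_subset_openI[OF t] by auto
    have "ennreal (\<phi> u) \<le> ennreal (2 * \<phi> (u/2))"
      using quasiconcave_le_double_half[OF q uI] by (rule ennreal_leI)
    also have "\<dots> = 2 * ennreal (\<phi> (u/2))" by (simp add: ennreal_mult')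
    finally have "ennreal (\<phi> u) \<le> 2 * ennreal (\<phi> (u/2))" .
    moreover have "dstar R g u \<le> rearr R (dstar R g) (u/2)"
      using uI by (intro antimono_on_le_rearr[OF antimono_on_dstar]) (auto simp: openI_def)
    ultimately have "ennreal (\<phi> u) * dstar R g u \<le> 2 * ennreal (\<phi> (u/2)) * rearr R (dstar R g) (u/2)"
      by (rule mult_mono) simp_all
    also have "\<dots> \<le> 2 * Q" unfolding Q_def mult.assoc using u by (intro mult_left_mono SUP_upper) auto
    finally show ?thesis .
  qed
  then have "(SUP u\<in>{0<..<t}. ennreal (\<phi> u) * dstar R g u) \<le> 2 * Q" by (rule SUP_least)
  also have "Q = ennreal (\<phi> t) * Sphi \<phi> R (dstar R g) t"
    using quasiconcave_pos[OF q t]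
    by (simp add: Sphi_def Q_def mult.assoc[symmetric] ennreal_mult[symmetric])
  finally show ?thesis by (simp add: mult.assoc)
qed

lemma rearr_Sphi_le_SUP_phi_dstar:
  assumes q: "quasiconcave R \<phi>" and t: "t \<in> openI R" and u: "u \<in> {0<..<t}"
  shows "rearr R (Sphi \<phi> R g) u
    \<le> 2 * (SUP s\<in>{0<..<t}. ennreal (\<phi> s) * dstar R g s) * ennreal (1 / \<phi> u)"
proof -
  define P where "P = (SUP s\<in>{0<..<t}. ennreal (\<phi> s) * dstar R g s)"
  have uI: "u \<in> openI R" using u Ioc_subset_openI[OF t] by auto
  have phi_rearr_le_P: "ennreal (\<phi> s) * rearr R g s \<le> P" if s: "s \<in> {0<..<t}" for s
  proof -
    have "ennreal (\<phi> s) * rearr R g s \<le> ennreal (\<phi> s) * dstar R g s"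
      using s by (intro mult_left_mono rearr_le_dstar) auto
    also have "\<dots> \<le> P" unfolding P_def using s by (rule SUP_upper)
    finally show ?thesis .
  qed
  have "Sphi \<phi> R g u \<le> ennreal (1 / \<phi> u) * P"
    using u by (intro Sphi_le_of_bound phi_rearr_le_P) auto
  moreover have "rearr R g u \<le> ennreal (1 / \<phi> u) * P"
    using quasiconcave_pos[OF q uI] phi_rearr_le_P[OF u] by (rule ennreal_le_inverse_mult)
  ultimately have "Sphi \<phi> R g u + rearr R g u \<le> ennreal (1 / \<phi> u) * P + ennreal (1 / \<phi> u) * P"
    by (rule add_mono)
  also have "\<dots> = 2 * P * ennreal (1 / \<phi> u)" by (simp only: mult_2[symmetric] ac_simps)
  finally show ?thesis using rearr_Sphi_le[OF q uI] unfolding P_def by (rule order_trans[rotated])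
qed

section \<open>Sufficiency of the B-condition\<close>

definition B_bound :: "ereal \<Rightarrow> (real \<Rightarrow> real) \<Rightarrow> real \<Rightarrow> bool" where
  "B_bound R \<phi> C \<longleftrightarrow> (\<forall>t \<in> openI R.
      ennreal (1 / t) * (\<integral>\<^sup>+ s \<in> {0<..<t}. ennreal (1 / \<phi> s) \<partial>lborel) \<le> ennreal (C / \<phi> t))"

lemma B_condition_iff_B_bound: "B_condition R \<phi> \<longleftrightarrow> (\<exists>C>0. B_bound R \<phi> C)"
  by (simp add: B_condition_def B_bound_def)

lemma dstar_le_of_B_bound:
  assumes q: "quasiconcave R \<phi>" and B: "B_bound R \<phi> C" and s: "s \<in> openI R"
    and bound: "\<And>u. u \<in> {0<..<s} \<Longrightarrow> rearr R h u \<le> M * ennreal (1 / \<phi> u)"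
  shows "dstar R h s \<le> M * ennreal (C / \<phi> s)"
proof -
  have "dstar R h s \<le> ennreal (1 / s) * (\<integral>\<^sup>+ u. M * (ennreal (1 / \<phi> u) * indicator {0<..<s} u) \<partial>lborel)"
    unfolding dstar_def using bound
    by (intro mult_left_mono nn_integral_mono) (auto simp: indicator_def)
  also have "\<dots> = M * (ennreal (1 / s) * (\<integral>\<^sup>+ u \<in> {0<..<s}. ennreal (1 / \<phi> u) \<partial>lborel))"
  proof -
    have "(\<lambda>u. ennreal (1 / \<phi> u) * indicator {0<..<s} u) \<in> borel_measurable borel"
      using Ioc_subset_openI[OF s] by (intro borel_measurable_inverse_phi_indicator[OF q]) (auto simp: is_interval_1)
    then show ?thesis by (simp add: nn_integral_cmult ac_simps)
  qed
  also have "\<dots> \<le> M * ennreal (C / \<phi> s)"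
    using B s unfolding B_bound_def by (intro mult_left_mono) auto
  finally show ?thesis .
qed

lemma Sphi_dstar_le_of_B_bound:
  assumes q: "quasiconcave R \<phi>" and "0 \<le> C" and B: "B_bound R \<phi> C" and t: "t \<in> openI R"
  shows "Sphi \<phi> R (dstar R g) t \<le> ennreal C * Sphi \<phi> R g t"
proof -
  define M where "M = (SUP s\<in>{0<..<t}. ennreal (\<phi> s) * rearr R g s)"
  have "ennreal (\<phi> s) * rearr R (dstar R g) s \<le> ennreal C * M" if s: "s \<in> {0<..<t}" for s
  proof -
    have sI: "s \<in> openI R" using s Ioc_subset_openI[OF t] by auto
    have "rearr R g u \<le> M * ennreal (1 / \<phi> u)" if u: "u \<in> {0<..<s}" for u
    proof -
      have "ennreal (\<phi> u) * rearr R g u \<le> M" unfolding M_def using u s by (intro SUP_upper) auto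
      moreover have "u \<in> openI R" using u Ioc_subset_openI[OF sI] by auto
      then have "0 < \<phi> u" by (rule quasiconcave_pos[OF q])
      ultimately show ?thesis by (subst mult.commute) (rule ennreal_le_inverse_mult)
    qed
    then have "dstar R g s \<le> M * ennreal (C / \<phi> s)" by (rule dstar_le_of_B_bound[OF q B sI])
    with rearr_le_antimono_on[OF antimono_on_dstar sI]
    have "ennreal (\<phi> s) * rearr R (dstar R g) s \<le> ennreal (\<phi> s) * (M * ennreal (C / \<phi> s))"
      by (intro mult_left_mono) (rule order_trans, simp_all)
    also have "\<dots> = (ennreal (\<phi> s) * ennreal (C / \<phi> s)) * M" by (simp add: ac_simps)
    also have "ennreal (\<phi> s) * ennreal (C / \<phi> s) = ennreal C"
      using quasiconcave_pos[OF q sI] \<open>0 \<le> C\<close> by (simp add: ennreal_mult[symmetric])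
    finally show ?thesis .
  qed
  then have "Sphi \<phi> R (dstar R g) t \<le> ennreal (1 / \<phi> t) * (ennreal C * M)" by (rule Sphi_le_of_bound)
  also have "\<dots> = ennreal C * Sphi \<phi> R g t" by (simp add: Sphi_def M_def ac_simps)
  finally show ?thesis .
qed

lemma dstar_Sphi_le_of_B_bound:
  assumes q: "quasiconcave R \<phi>" and "0 \<le> C" and B: "B_bound R \<phi> C" and t: "t \<in> openI R"
  shows "dstar R (Sphi \<phi> R g) t \<le> ennreal (4 * C) * Sphi \<phi> R (dstar R g) t"
proof -
  define P where "P = (SUP u\<in>{0<..<t}. ennreal (\<phi> u) * dstar R g u)"
  have "dstar R (Sphi \<phi> R g) t \<le> 2 * P * ennreal (C / \<phi> t)"
    unfolding P_def by (intro dstar_le_of_B_bound[OF q B t] rearr_Sphi_le_SUP_phi_dstar[OF q t])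
  also have "\<dots> \<le> 2 * (2 * ennreal (\<phi> t) * Sphi \<phi> R (dstar R g) t) * ennreal (C / \<phi> t)"
    unfolding P_def using SUP_phi_dstar_le[OF q t] by (intro mult_right_mono mult_left_mono) simp_all
  also have "\<dots> = 4 * (ennreal (\<phi> t) * ennreal (C / \<phi> t)) * Sphi \<phi> R (dstar R g) t"
    by (simp add: ac_simps)
  also have "4 * (ennreal (\<phi> t) * ennreal (C / \<phi> t)) = ennreal (4 * C)"
    using quasiconcave_pos[OF q t] \<open>0 \<le> C\<close> by (simp add: ennreal_mult[symmetric] ennreal_mult')
  finally show ?thesis .
qed

section \<open>Necessity of the B-condition\<close>

lemma rearr_inverse_phi_half_bounds:
  assumes q: "quasiconcave R \<phi>" and g: "\<And>x. x \<in> openI R \<Longrightarrow> g x = ennreal (1 / \<phi> (x/2))"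
    and u: "u \<in> openI R"
  shows "ennreal (1 / \<phi> u) \<le> rearr R g u" and "rearr R g u \<le> ennreal (2 / \<phi> u)"
proof -
  have anti: "antimono_on (openI R) g"
    by (intro monotone_onI) (simp add: g openI_half quasiconcave_inverse_antimono[OF q])
  obtain u' where u': "u < u'" "u' \<le> 2*u" "u' \<in> openI R" using openI_exists_larger[OF u] by blast
  have "ennreal (1 / \<phi> u) \<le> g u'"
    using u' g[OF u'(3)] by (simp add: quasiconcave_inverse_antimono[OF q openI_half[OF u'(3)] u])
  also have "\<dots> \<le> rearr R g u"
    using u u' by (intro antimono_on_le_rearr[OF anti]) (auto simp: openI_def)
  finally show "ennreal (1 / \<phi> u) \<le> rearr R g u" .
  have "rearr R g u \<le> ennreal (1 / \<phi> (u/2))" using rearr_le_antimono_on[OF anti u] g[OF u] by simp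
  also have "\<dots> \<le> ennreal (2 / \<phi> u)"
    using quasiconcave_le_double_half[OF q u] quasiconcave_pos[OF q openI_half[OF u]] quasiconcave_pos[OF q u]
    by (intro ennreal_leI) (simp add: field_simps)
  finally show "rearr R g u \<le> ennreal (2 / \<phi> u)" .
qed

lemma B_bound_of_Sphi_dstar_le:
  assumes q: "quasiconcave R \<phi>" and "0 \<le> C"
    and g: "\<And>x. x \<in> openI R \<Longrightarrow> g x = ennreal (1 / \<phi> (x/2))"
    and H: "\<And>t. t \<in> openI R \<Longrightarrow> Sphi \<phi> R (dstar R g) t \<le> ennreal C * Sphi \<phi> R g t"
  shows "B_bound R \<phi> (4 * C)"
  unfolding B_bound_def
proof
  fix t assume t: "t \<in> openI R"
  have "Sphi \<phi> R g t \<le> ennreal (1 / \<phi> t) * 2"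
  proof (rule Sphi_le_of_bound)
    fix s assume "s \<in> {0<..<t}"
    then have sI: "s \<in> openI R" using Ioc_subset_openI[OF t] by auto
    have "rearr R g s \<le> ennreal (2 / \<phi> s)" using q g sI by (rule rearr_inverse_phi_half_bounds(2))
    then have "ennreal (\<phi> s) * rearr R g s \<le> ennreal (\<phi> s) * ennreal (2 / \<phi> s)"
      by (rule mult_left_mono) simp
    also have "\<dots> = 2" using quasiconcave_pos[OF q sI] by (simp add: ennreal_mult[symmetric])
    finally show "ennreal (\<phi> s) * rearr R g s \<le> 2" .
  qed
  then have S_upper: "ennreal C * Sphi \<phi> R g t \<le> ennreal (1 / \<phi> t) * ennreal (2 * C)"
    using \<open>0 \<le> C\<close> by (subst ennreal_mult') (auto simp: ac_simps intro: mult_left_mono)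
  define X where "X = ennreal (1 / t) * (\<integral>\<^sup>+ s \<in> {0<..<t}. ennreal (1 / \<phi> s) \<partial>lborel)"
  have "X \<le> dstar R g t"
    unfolding X_def dstar_def using rearr_inverse_phi_half_bounds(1)[OF q g] Ioc_subset_openI[OF t]
    by (intro mult_left_mono nn_integral_mono) (auto simp: indicator_def subset_eq)
  also have "\<dots> \<le> rearr R (dstar R g) (t/2)"
    using t by (intro antimono_on_le_rearr[OF antimono_on_dstar]) (auto simp: openI_def)
  finally have "ennreal (1 / \<phi> t) * (ennreal (\<phi> (t/2)) * X) \<le> Sphi \<phi> R (dstar R g) t"
    using t by (intro order_trans[OF _ le_Sphi[of "t/2"]] mult_left_mono) (auto simp: openI_def)
  also have "\<dots> \<le> ennreal (1 / \<phi> t) * ennreal (2 * C)" using H[OF t] S_upper by (rule order_trans)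
  finally have "ennreal (\<phi> (t/2)) * X \<le> ennreal (2 * C)"
    by (rule ennreal_inverse_mult_le_cancel[OF quasiconcave_pos[OF q t]])
  then have "X \<le> ennreal (1 / \<phi> (t/2)) * ennreal (2 * C)"
    using quasiconcave_pos[OF q openI_half[OF t]] by (rule ennreal_le_inverse_mult[rotated])
  also have "\<dots> \<le> ennreal (4 * C / \<phi> t)"
    using quasiconcave_le_double_half[OF q t] quasiconcave_pos[OF q t]
      quasiconcave_pos[OF q openI_half[OF t]] \<open>0 \<le> C\<close>
    by (simp add: ennreal_mult[symmetric] ennreal_le_iff field_simps mult_left_mono)
  finally show "X \<le> ennreal (4 * C / \<phi> t)" .
qed

lemma rearr_indicator_Ioo:
  assumes a: "a \<in> openI R" and "0 < u"
  shows "rearr R (indicator {0<..<a}) u = indicator {0<..<a} u"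
proof (cases "u < a")
  case True
  have "(indicator {0<..<a} :: real \<Rightarrow> ennreal) \<in> borel_measurable (restrict_space borel (openI R))"
    by (intro measurable_restrict_space1 borel_measurable_indicator) simp
  then have "1 \<le> rearr R (indicator {0<..<a}) u"
    using True \<open>0 < u\<close> by (intro rearr_ge_of_bound[of _ _ _ "(u + a) / 2"] openI_downward[OF a])
      (auto simp: openI_def)
  moreover have "rearr R (indicator {0<..<a}) u \<le> 1"
    by (rule rearr_le_of_bound[OF \<open>0 < u\<close>]) (simp add: indicator_def of_bool_def)
  ultimately show ?thesis using True \<open>0 < u\<close> by simp
next
  case False
  then have "rearr R (indicator {0<..<a}) u \<le> 0"
    using \<open>0 < u\<close> by (intro rearr_le_of_bound) simp_all
  then show ?thesis using False by simp
qed

lemma dstar_indicator_Ioo: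
  assumes a: "a \<in> openI R" and "0 < s"
  shows "dstar R (indicator {0<..<a}) s = ennreal (min s a / s)"
proof -
  have "(\<integral>\<^sup>+ u \<in> {0<..<s}. rearr R (indicator {0<..<a}) u \<partial>lborel)
      = (\<integral>\<^sup>+ u. indicator {0<..<min s a} u \<partial>lborel)"
    by (intro nn_integral_cong) (auto simp: rearr_indicator_Ioo[OF a] indicator_def)
  also have "\<dots> = ennreal (min s a)" using a \<open>0 < s\<close> by (simp add: openI_def)
  finally show ?thesis
    using a \<open>0 < s\<close> by (simp add: dstar_def openI_def ennreal_mult[symmetric])
qed

lemma Sphi_dstar_indicator_le:
  assumes q: "quasiconcave R \<phi>" and a: "a \<in> openI R" and t: "t \<in> openI R"
  shows "Sphi \<phi> R (dstar R (indicator {0<..<a})) t \<le> ennreal (\<phi> a / \<phi> t)"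
proof -
  have "ennreal (\<phi> s) * rearr R (dstar R (indicator {0<..<a})) s \<le> ennreal (\<phi> a)"
    if s: "s \<in> {0<..<t}" for s
  proof -
    have sI: "s \<in> openI R" using s Ioc_subset_openI[OF t] by auto
    have "\<phi> s * (min s a / s) \<le> \<phi> a"
    proof (cases "s \<le> a")
      case True then show ?thesis using quasiconcave_mono[OF q sI a] s by simp
    next
      case False then show ?thesis
        using quasiconcave_ratio[OF q a sI] s by (simp add: pos_divide_le_eq)
    qed
    have "rearr R (dstar R (indicator {0<..<a})) s \<le> dstar R (indicator {0<..<a}) s"
      by (rule rearr_le_antimono_on[OF antimono_on_dstar sI])
    also have "\<dots> = ennreal (min s a / s)" using s by (simp add: dstar_indicator_Ioo[OF a])
    finally have "ennreal (\<phi> s) * rearr R (dstar R (indicator {0<..<a})) s \<le> ennreal (\<phi> s) * ennreal (min s a / s)"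
      by (rule mult_left_mono) simp
    also have "\<dots> = ennreal (\<phi> s * (min s a / s))"
      using quasiconcave_pos[OF q sI] by (simp add: ennreal_mult'[symmetric])
    also have "\<dots> \<le> ennreal (\<phi> a)" using \<open>\<phi> s * (min s a / s) \<le> \<phi> a\<close> by (rule ennreal_leI)
    finally show ?thesis .
  qed
  then have "Sphi \<phi> R (dstar R (indicator {0<..<a})) t \<le> ennreal (1 / \<phi> t) * ennreal (\<phi> a)"
    by (rule Sphi_le_of_bound)
  then show ?thesis
    using quasiconcave_pos[OF q t] quasiconcave_pos[OF q a] by (simp add: ennreal_mult[symmetric])
qed

lemma Sphi_indicator_ge:
  assumes q: "quasiconcave R \<phi>" and a: "a \<in> openI R" and x: "x \<in> openI R" and s: "s \<in> openI R"
    and "x \<le> s" "a \<le> s"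
  shows "ennreal (\<phi> a / (2 * \<phi> s)) \<le> Sphi \<phi> R (indicator {0<..<a}) x"
proof -
  define m where "m = min x a / 2"
  have m: "0 < m" "m < x" "m < a" using a x by (auto simp: m_def openI_def)
  have minI: "min x a \<in> openI R" using a x by (simp add: min_def)
  have px: "0 < \<phi> x" using quasiconcave_pos[OF q x] .
  have "\<phi> a / (2 * \<phi> s) \<le> \<phi> (min x a) / (2 * \<phi> x)"
  proof (cases "x \<le> a")
    case True
    have "\<phi> a \<le> \<phi> s" using quasiconcave_mono[OF q a s \<open>a \<le> s\<close>] .
    with True px quasiconcave_pos[OF q s] show ?thesis by (simp add: min_def field_simps)
  next
    case False
    have "\<phi> x \<le> \<phi> s" using quasiconcave_mono[OF q x s \<open>x \<le> s\<close>] .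
    with False px quasiconcave_pos[OF q a] show ?thesis
      by (simp add: min_def divide_left_mono)
  qed
  also have "\<dots> \<le> \<phi> m / \<phi> x"
    using quasiconcave_le_double_half[OF q minI] px by (simp add: m_def field_simps)
  finally have "ennreal (\<phi> a / (2 * \<phi> s)) \<le> ennreal (\<phi> m / \<phi> x)" by (rule ennreal_leI)
  also have "\<dots> = ennreal (1 / \<phi> x) * (ennreal (\<phi> m) * 1)"
  proof -
    have "0 < \<phi> m" using m by (intro quasiconcave_pos[OF q] openI_downward[OF x]) simp_all
    then show ?thesis using px by (simp add: ennreal_mult[symmetric])
  qed
  also have "\<dots> \<le> Sphi \<phi> R (indicator {0<..<a}) x"
    using le_Sphi[of m x \<phi> R "indicator {0<..<a}"] m rearr_indicator_Ioo[OF a, of m] by simp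
  finally show ?thesis .
qed

lemma rearr_Sphi_indicator_ge:
  assumes q: "quasiconcave R \<phi>" and a: "a \<in> openI R" and u: "u \<in> openI R" "a \<le> u"
  shows "ennreal (\<phi> a / (4 * \<phi> u)) \<le> rearr R (Sphi \<phi> R (indicator {0<..<a})) u"
proof -
  obtain u' where u': "u < u'" "u' \<le> 2*u" "u' \<in> openI R" using openI_exists_larger[OF u(1)] by blast
  have "\<phi> u' \<le> 2 * \<phi> u"
    using quasiconcave_le_double_half[OF q u'(3)] quasiconcave_mono[OF q openI_half[OF u'(3)] u(1)] u' by simp
  then have "ennreal (\<phi> a / (4 * \<phi> u)) \<le> ennreal (\<phi> a / (2 * \<phi> u'))"
    using quasiconcave_pos[OF q a] quasiconcave_pos[OF q u'(3)]
    by (intro ennreal_leI divide_left_mono) simp_all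
  also have "\<dots> \<le> rearr R (Sphi \<phi> R (indicator {0<..<a})) u"
    using u u' by (intro rearr_ge_of_bound[OF borel_measurable_Sphi[OF q]] Sphi_indicator_ge[OF q a])
      (auto simp: openI_def)
  finally show ?thesis .
qed

lemma inverse_phi_integral_le_of_dstar_Sphi_le:
  assumes q: "quasiconcave R \<phi>" and "0 \<le> C" and t: "t \<in> openI R" and a: "0 < a" "a < t"
    and H: "dstar R (Sphi \<phi> R (indicator {0<..<a})) t \<le> ennreal C * Sphi \<phi> R (dstar R (indicator {0<..<a})) t"
  shows "(\<integral>\<^sup>+ s \<in> {a<..<t}. ennreal (1 / \<phi> s) \<partial>lborel) \<le> ennreal (4 * C * t / \<phi> t)"
proof -
  let ?g = "indicator {0<..<a} :: real \<Rightarrow> ennreal"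
  have aI: "a \<in> openI R" using a by (intro openI_downward[OF t]) simp_all
  have sub: "{a<..<t} \<subseteq> openI R" using a Ioc_subset_openI[OF t] by auto
  have pa: "0 < \<phi> a" and pt: "0 < \<phi> t" and t0: "0 < t"
    using quasiconcave_pos[OF q aI] quasiconcave_pos[OF q t] a by simp_all
  have "(\<lambda>s. ennreal (1 / \<phi> s) * indicator {a<..<t} s) \<in> borel_measurable borel"
    using sub by (intro borel_measurable_inverse_phi_indicator[OF q]) (auto simp: is_interval_1)
  then have "ennreal (\<phi> a / 4) * (\<integral>\<^sup>+ s \<in> {a<..<t}. ennreal (1 / \<phi> s) \<partial>lborel)
      = (\<integral>\<^sup>+ s. ennreal (\<phi> a / 4) * (ennreal (1 / \<phi> s) * indicator {a<..<t} s) \<partial>lborel)"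
    by (simp add: nn_integral_cmult)
  also have "\<dots> \<le> (\<integral>\<^sup>+ s \<in> {0<..<t}. rearr R (Sphi \<phi> R ?g) s \<partial>lborel)"
  proof (intro nn_integral_mono)
    fix s
    show "ennreal (\<phi> a / 4) * (ennreal (1 / \<phi> s) * indicator {a<..<t} s)
        \<le> rearr R (Sphi \<phi> R ?g) s * indicator {0<..<t} s"
    proof (cases "s \<in> {a<..<t}")
      case True
      then have sI: "s \<in> openI R" using sub by auto
      have "ennreal (\<phi> a / 4) * ennreal (1 / \<phi> s) = ennreal (\<phi> a / (4 * \<phi> s))"
        using pa quasiconcave_pos[OF q sI] by (simp add: ennreal_mult[symmetric])
      also have "\<dots> \<le> rearr R (Sphi \<phi> R ?g) s"
        using True by (intro rearr_Sphi_indicator_ge[OF q aI sI]) simp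
      finally show ?thesis using True a by (simp add: indicator_def)
    qed simp
  qed
  also have "\<dots> = ennreal t * dstar R (Sphi \<phi> R ?g) t"
    using t0 by (simp add: dstar_def ennreal_mult_inverse_cancel)
  also have "\<dots> \<le> ennreal t * (ennreal C * Sphi \<phi> R (dstar R ?g) t)"
    using H by (rule mult_left_mono) simp
  also have "\<dots> \<le> ennreal t * (ennreal C * ennreal (\<phi> a / \<phi> t))"
    using Sphi_dstar_indicator_le[OF q aI t] by (intro mult_left_mono) simp_all
  also have "\<dots> = ennreal (\<phi> a / 4) * ennreal (4 * C * t / \<phi> t)"
    using pa pt t0 \<open>0 \<le> C\<close> by (simp add: ennreal_mult[symmetric] field_simps)
  finally show ?thesis
    using pa by (subst (asm) ennreal_mult_le_mult_iff) (auto simp: top_unique)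
qed

lemma B_bound_of_dstar_Sphi_le:
  assumes q: "quasiconcave R \<phi>" and "0 \<le> C"
    and H: "\<And>a t. 0 < a \<Longrightarrow> a < t \<Longrightarrow> t \<in> openI R \<Longrightarrow>
      dstar R (Sphi \<phi> R (indicator {0<..<a})) t \<le> ennreal C * Sphi \<phi> R (dstar R (indicator {0<..<a})) t"
  shows "B_bound R \<phi> (4 * C)"
  unfolding B_bound_def
proof
  fix t assume t: "t \<in> openI R"
  have "(\<integral>\<^sup>+ s \<in> {0<..<t}. ennreal (1 / \<phi> s) \<partial>lborel) \<le> ennreal (4 * C * t / \<phi> t)"
  proof (rule nn_integral_Ioo_le_of_truncations)
    show "(\<lambda>s. ennreal (1 / \<phi> s) * indicator {0<..<t} s) \<in> borel_measurable borel"
      using Ioc_subset_openI[OF t] by (intro borel_measurable_inverse_phi_indicator[OF q]) (auto simp: is_interval_1)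
  qed (rule inverse_phi_integral_le_of_dstar_Sphi_le[OF q \<open>0 \<le> C\<close> t _ _ H[OF _ _ t]])
  then have "ennreal (1 / t) * (\<integral>\<^sup>+ s \<in> {0<..<t}. ennreal (1 / \<phi> s) \<partial>lborel)
      \<le> ennreal (1 / t) * ennreal (4 * C * t / \<phi> t)"
    by (rule mult_left_mono) simp
  also have "\<dots> = ennreal (4 * C / \<phi> t)"
    using t quasiconcave_pos[OF q t] \<open>0 \<le> C\<close> by (simp add: openI_def ennreal_mult[symmetric])
  finally show "ennreal (1 / t) * (\<integral>\<^sup>+ s \<in> {0<..<t}. ennreal (1 / \<phi> s) \<partial>lborel) \<le> ennreal (4 * C / \<phi> t)" .
qed

definition dstar_Sphi_bound :: "ereal \<Rightarrow> (real \<Rightarrow> real) \<Rightarrow> real \<Rightarrow> bool" where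
  "dstar_Sphi_bound R \<phi> C \<longleftrightarrow> (\<forall>f :: real \<Rightarrow> real. f \<in> borel_measurable (restrict_space lebesgue (openI R)) \<longrightarrow>
     (\<forall>t \<in> openI R. dstar R (Sphi \<phi> R (\<lambda>x. ennreal \<bar>f x\<bar>)) t
        \<le> ennreal C * Sphi \<phi> R (dstar R (\<lambda>x. ennreal \<bar>f x\<bar>)) t))"

definition Sphi_dstar_bound :: "ereal \<Rightarrow> (real \<Rightarrow> real) \<Rightarrow> real \<Rightarrow> bool" where
  "Sphi_dstar_bound R \<phi> C \<longleftrightarrow> (\<forall>f :: real \<Rightarrow> real. f \<in> borel_measurable (restrict_space lebesgue (openI R)) \<longrightarrow>
     (\<forall>t \<in> openI R. Sphi \<phi> R (dstar R (\<lambda>x. ennreal \<bar>f x\<bar>)) t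
        \<le> ennreal C * Sphi \<phi> R (\<lambda>x. ennreal \<bar>f x\<bar>) t))"

lemma dstar_Sphi_bound_iff_B_condition:
  assumes q: "quasiconcave R \<phi>"
  shows "(\<exists>C>0. dstar_Sphi_bound R \<phi> C) \<longleftrightarrow> B_condition R \<phi>"
proof
  assume "\<exists>C>0. dstar_Sphi_bound R \<phi> C"
  then obtain C where "0 < C" and H: "dstar_Sphi_bound R \<phi> C" by blast
  have "B_bound R \<phi> (4 * C)"
  proof (rule B_bound_of_dstar_Sphi_le[OF q])
    fix a t assume "t \<in> openI R"
    have "(indicator {0<..<a} :: real \<Rightarrow> real) \<in> borel_measurable (restrict_space lebesgue (openI R))"
      by (intro measurable_restrict_space1 borel_measurable_indicator) simp
    moreover have "(\<lambda>x. ennreal \<bar>indicator {0<..<a} x :: real\<bar>) = indicator {0<..<a}"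
      by (auto simp: indicator_def)
    ultimately show "dstar R (Sphi \<phi> R (indicator {0<..<a})) t
        \<le> ennreal C * Sphi \<phi> R (dstar R (indicator {0<..<a})) t"
      using H \<open>t \<in> openI R\<close> unfolding dstar_Sphi_bound_def by metis
  qed (use \<open>0 < C\<close> in simp)
  then show "B_condition R \<phi>"
    unfolding B_condition_iff_B_bound using \<open>0 < C\<close> by (intro exI[of _ "4 * C"]) simp
next
  assume "B_condition R \<phi>"
  then obtain C where "0 < C" "B_bound R \<phi> C" by (auto simp: B_condition_iff_B_bound)
  then have "dstar_Sphi_bound R \<phi> (4 * C)"
    unfolding dstar_Sphi_bound_def by (simp add: dstar_Sphi_le_of_B_bound[OF q])
  then show "\<exists>C>0. dstar_Sphi_bound R \<phi> C" using \<open>0 < C\<close> by (intro exI[of _ "4 * C"]) simp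
qed

lemma Sphi_dstar_bound_iff_B_condition:
  assumes q: "quasiconcave R \<phi>"
  shows "(\<exists>C>0. Sphi_dstar_bound R \<phi> C) \<longleftrightarrow> B_condition R \<phi>"
proof
  assume "\<exists>C>0. Sphi_dstar_bound R \<phi> C"
  then obtain C where "0 < C" and H: "Sphi_dstar_bound R \<phi> C" by blast
  define f where "f x = 1 / \<phi> (x/2)" for x
  have "antimono_on (openI R) f"
    using quasiconcave_mono[OF q] quasiconcave_pos[OF q]
    by (intro monotone_onI) (simp add: f_def openI_half divide_left_mono)
  then have "f \<in> borel_measurable (restrict_space lebesgue (openI R))"
    by (intro borel_measurable_restrict_lebesgue openI_sets_borel
        borel_measurable_antimono_on_interval is_interval_openI)
  moreover have f_eq: "ennreal \<bar>f x\<bar> = ennreal (1 / \<phi> (x/2))" if "x \<in> openI R" for x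
    using quasiconcave_pos[OF q openI_half[OF that]] by (simp add: f_def)
  ultimately have "B_bound R \<phi> (4 * C)"
    using H \<open>0 < C\<close> unfolding Sphi_dstar_bound_def by (intro B_bound_of_Sphi_dstar_le[OF q _ f_eq]) auto
  then show "B_condition R \<phi>"
    unfolding B_condition_iff_B_bound using \<open>0 < C\<close> by (intro exI[of _ "4 * C"]) simp
next
  assume "B_condition R \<phi>"
  then obtain C where "0 < C" "B_bound R \<phi> C" by (auto simp: B_condition_iff_B_bound)
  then have "Sphi_dstar_bound R \<phi> C"
    unfolding Sphi_dstar_bound_def by (simp add: Sphi_dstar_le_of_B_bound[OF q])
  then show "\<exists>C>0. Sphi_dstar_bound R \<phi> C" using \<open>0 < C\<close> by blast
qed

theorem lemma4p2:
  fixes R :: ereal and \<phi> :: "real \<Rightarrow> real"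
  assumes "0 < R" and "quasiconcave R \<phi>"
  shows "((\<exists>C>0. \<forall>f :: real \<Rightarrow> real. f \<in> borel_measurable (restrict_space lebesgue (openI R)) \<longrightarrow>
            (\<forall>t \<in> openI R.
               dstar R (Sphi \<phi> R (\<lambda>x. ennreal \<bar>f x\<bar>)) t
                 \<le> ennreal C * Sphi \<phi> R (dstar R (\<lambda>x. ennreal \<bar>f x\<bar>)) t))
          \<longleftrightarrow> B_condition R \<phi>)
       \<and> ((\<exists>C>0. \<forall>f :: real \<Rightarrow> real. f \<in> borel_measurable (restrict_space lebesgue (openI R)) \<longrightarrow>
            (\<forall>t \<in> openI R.
               Sphi \<phi> R (dstar R (\<lambda>x. ennreal \<bar>f x\<bar>)) t
                 \<le> ennreal C * Sphi \<phi> R (\<lambda>x. ennreal \<bar>f x\<bar>) t))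
          \<longleftrightarrow> B_condition R \<phi>)"
  using dstar_Sphi_bound_iff_B_condition[OF assms(2)] Sphi_dstar_bound_iff_B_condition[OF assms(2)]
  unfolding dstar_Sphi_bound_def Sphi_dstar_bound_def by blast

end
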